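(* Let $\epsilon=\exp\!\left(-\frac{1}{\sigma^2}(\|u_T\|_\infty+\|f\|_\infty T)\right)$ and define $\widehat\psi^0=0\in\mathcal{M}$, $\widehat\phi^{n+\frac12}=\widehat\Phi(\widehat\psi^n)$, $\widehat\psi^{n+1}=\widehat\Psi(\widehat\phi^{n+\frac12})$ for $n\in\mathbb{N}$. Then: (i) $(\widehat\phi^{n+\frac12})_n$ is an entrywise nonincreasing sequence in $\mathcal{M}_\epsilon$; (ii) $(\widehat\psi^n)_n$ is an entrywise nondecreasing sequence in $\mathcal{M}_0$, bounded from above by $\frac{\|m_0\|_\infty}{\epsilon}$; (iii) $(\widehat\phi^{n+\frac12},\widehat\psi^n)_n$ converges to a couple $(\widehat\phi,\widehat\psi)\in\mathcal{M}_\epsilon\times\mathcal{M}_0$ satisfying, for $0\le i\le I-1$, $0\le j\le J$, $\frac{\widehat\phi_{i+1,j}-\widehat\phi_{i,j}}{\Delta t}+\frac{\sigma^2}{2}\frac{\widehat\phi_{i,j+1}-2\widehat\phi_{i,j}+\widehat\phi_{i,j-1}}{(\Delta x)^2}=-\frac{1}{\sigma^2}f(x_j,\widehat\phi_{i,j}\widehat\psi_{i,j})\widehat\phi_{i,j}$, $\widehat\phi_{I,j}=\exp(u_T(x_j)/\sigma^2)$, $\frac{\widehat\psi_{i+1,j}-\widehat\psi_{i,j}}{\Delta t}-\frac{\sigma^2}{2}\frac{\widehat\psi_{i+1,j+1}-2\widehat\psi_{i+1,j}+\widehat\psi_{i+1,j-1}}{(\Delta x)^2}=\frac{1}{\sigma^2}f(x_j,\widehat\phi_{i+1,j}\widehat\psi_{i+1,j})\widehat\psi_{i+1,j}$,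 $\widehat\psi_{0,j}=m_0(x_j)/\widehat\phi_{0,j}$, with the Neumann conventions for indices $-1$ and $J+1$.
   Context: Discrete setting: $\Omega=(0,1)$, $T>0$, $\sigma>0$; $u_T:[0,1]\to\mathbb{R}$ bounded, $m_0:[0,1]\to\mathbb{R}$ bounded with $m_0\ge0$. $f:[0,1]\times\mathbb{R}\to\mathbb{R}$ is continuous and nonincreasing in its second variable, bounded with $\|f\|_\infty=\sup|f|$, and $f\le0$. For positive integers $I,J$: $\Delta t=T/I$, $\Delta x=1/J$, $x_j=j\Delta x$. $\mathcal{M}$ is the set of real matrices $(m_{i,j})_{0\le i\le I,0\le j\le J}$, $\mathcal{M}_\epsilon=\{m\in\mathcal{M}: m_{i,j}\ge\epsilon\ \forall i,j\}$. Conventions: $a_{i,-1}=a_{i,0}$, $a_{i,J+1}=a_{i,J}$ for any matrix $a$. $\widehat\Phi:\mathcal{M}_0\to\mathcal{M}$ maps $\widehat\psi$ to the unique $\widehat\phi$ solving the $\phi$-equations in (iii) (with $\widehat\psi$ given) and $\widehat\phi_{I,j}=\exp(u_T(x_j)/\sigma^2)$; $\widehat\Psi:\mathcal{M}_\epsilon\to\mathcal{M}$ maps $\widehat\phi$ to the unique $\widehat\psi$ solving the $\psi$-equations in (iii) (with $\widehat\phi$ given) and $\widehat\psi_{0,j}=m_0(x_j)/\widehat\phi_{0,j}$. These maps are well defined, $\widehat\Phi(\mathcal{M}_0)\subset\mathcal{M}_\epsilon$ and $\widehat\Psi(\mathcal{M}_\epsilon)\subset\mathcal{M}_0$. *)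

theory Defs
  imports "HOL-Analysis.Analysis"
begin

text \<open>Matrices (m_{i,j}), 0 \<le> i \<le> I, 0 \<le> j \<le> J, are represented as functions
  nat \<Rightarrow> nat \<Rightarrow> real; entries outside the index range are irrelevant and,
  for the maps defined via THE, normalised to 0 (set mats).\<close>

definition mats :: "nat \<Rightarrow> nat \<Rightarrow> (nat \<Rightarrow> nat \<Rightarrow> real) set" where
  "mats I J = {a. \<forall>i j. (I < i \<or> J < j) \<longrightarrow> a i j = 0}"

definition Meps :: "nat \<Rightarrow> nat \<Rightarrow> real \<Rightarrow> (nat \<Rightarrow> nat \<Rightarrow> real) set" where
  "Meps I J eps = {a. \<forall>i\<le>I. \<forall>j\<le>J. eps \<le> a i j}"

text \<open>Neumann conventions: a_{i,-1} = a_{i,0}, a_{i,J+1} = a_{i,J}.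
  (On nat, 0 - 1 = 0.)\<close>
definition lft :: "(nat \<Rightarrow> nat \<Rightarrow> real) \<Rightarrow> nat \<Rightarrow> nat \<Rightarrow> real" where
  "lft a i j = a i (j - 1)"
definition rgt :: "nat \<Rightarrow> (nat \<Rightarrow> nat \<Rightarrow> real) \<Rightarrow> nat \<Rightarrow> nat \<Rightarrow> real" where
  "rgt J a i j = a i (min (j + 1) J)"

definition xg :: "nat \<Rightarrow> nat \<Rightarrow> real" where
  "xg J j = real j / real J"

definition phi_eqs ::
  "real \<Rightarrow> real \<Rightarrow> nat \<Rightarrow> nat \<Rightarrow> (real \<Rightarrow> real) \<Rightarrow> (real \<Rightarrow> real \<Rightarrow> real)
   \<Rightarrow> (nat \<Rightarrow> nat \<Rightarrow> real) \<Rightarrow> (nat \<Rightarrow> nat \<Rightarrow> real) \<Rightarrow> bool" where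
  "phi_eqs T \<sigma> I J uT f psi phi \<longleftrightarrow>
     (\<forall>i<I. \<forall>j\<le>J.
        (phi (i+1) j - phi i j) / (T / real I)
        + \<sigma>\<^sup>2 / 2 * (rgt J phi i j - 2 * phi i j + lft phi i j) / (1 / real J)\<^sup>2
        = - (1 / \<sigma>\<^sup>2) * f (xg J j) (phi i j * psi i j) * phi i j)
   \<and> (\<forall>j\<le>J. phi I j = exp (uT (xg J j) / \<sigma>\<^sup>2))"

definition psi_eqs ::
  "real \<Rightarrow> real \<Rightarrow> nat \<Rightarrow> nat \<Rightarrow> (real \<Rightarrow> real) \<Rightarrow> (real \<Rightarrow> real \<Rightarrow> real)
   \<Rightarrow> (nat \<Rightarrow> nat \<Rightarrow> real) \<Rightarrow> (nat \<Rightarrow> nat \<Rightarrow> real) \<Rightarrow> bool" where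
  "psi_eqs T \<sigma> I J m0 f phi psi \<longleftrightarrow>
     (\<forall>i<I. \<forall>j\<le>J.
        (psi (i+1) j - psi i j) / (T / real I)
        - \<sigma>\<^sup>2 / 2 * (rgt J psi (i+1) j - 2 * psi (i+1) j + lft psi (i+1) j) / (1 / real J)\<^sup>2
        = (1 / \<sigma>\<^sup>2) * f (xg J j) (phi (i+1) j * psi (i+1) j) * psi (i+1) j)
   \<and> (\<forall>j\<le>J. psi 0 j = m0 (xg J j) / phi 0 j)"

definition PhiHat ::
  "real \<Rightarrow> real \<Rightarrow> nat \<Rightarrow> nat \<Rightarrow> (real \<Rightarrow> real) \<Rightarrow> (real \<Rightarrow> real \<Rightarrow> real)
   \<Rightarrow> (nat \<Rightarrow> nat \<Rightarrow> real) \<Rightarrow> (nat \<Rightarrow> nat \<Rightarrow> real)" where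
  "PhiHat T \<sigma> I J uT f psi = (THE phi. phi \<in> mats I J \<and> phi_eqs T \<sigma> I J uT f psi phi)"

definition PsiHat ::
  "real \<Rightarrow> real \<Rightarrow> nat \<Rightarrow> nat \<Rightarrow> (real \<Rightarrow> real) \<Rightarrow> (real \<Rightarrow> real \<Rightarrow> real)
   \<Rightarrow> (nat \<Rightarrow> nat \<Rightarrow> real) \<Rightarrow> (nat \<Rightarrow> nat \<Rightarrow> real)" where
  "PsiHat T \<sigma> I J m0 f phi = (THE psi. psi \<in> mats I J \<and> psi_eqs T \<sigma> I J m0 f phi psi)"

text \<open>The iteration: psi^0 = 0, phi^{n+1/2} = PhiHat psi^n, psi^{n+1} = PsiHat phi^{n+1/2}.\<close>
primrec psi_seq ::
  "real \<Rightarrow> real \<Rightarrow> nat \<Rightarrow> nat \<Rightarrow> (real \<Rightarrow> real) \<Rightarrow> (real \<Rightarrow> real) \<Rightarrow> (real \<Rightarrow> real \<Rightarrow> real)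
   \<Rightarrow> nat \<Rightarrow> (nat \<Rightarrow> nat \<Rightarrow> real)" where
  "psi_seq T \<sigma> I J uT m0 f 0 = (\<lambda>i j. 0)"
| "psi_seq T \<sigma> I J uT m0 f (Suc n) =
     PsiHat T \<sigma> I J m0 f (PhiHat T \<sigma> I J uT f (psi_seq T \<sigma> I J uT m0 f n))"

definition phi_seq ::
  "real \<Rightarrow> real \<Rightarrow> nat \<Rightarrow> nat \<Rightarrow> (real \<Rightarrow> real) \<Rightarrow> (real \<Rightarrow> real) \<Rightarrow> (real \<Rightarrow> real \<Rightarrow> real)
   \<Rightarrow> nat \<Rightarrow> (nat \<Rightarrow> nat \<Rightarrow> real)" where
  "phi_seq T \<sigma> I J uT m0 f n = PhiHat T \<sigma> I J uT f (psi_seq T \<sigma> I J uT m0 f n)"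

end

theory Submission
  imports Defs
begin

(* Every time row of the phi-equation (read backward in time) and of the psi-equation
   (read forward in time) is a nonlinear tridiagonal system with Neumann conventions
     (a + g_j(v_j)) v_j - k (v_{j+1} - 2 v_j + v_{j-1}) = b_j,    a > 0, k >= 0,
   whose coefficient g_j = -f(x_j, . * p_j) / sigma^2 is nonnegative and nondecreasing
   (f <= 0 is nonincreasing; p >= 0 is the row of the other unknown).  Solving row by row then shows that PhiHat and PsiHat are
   well defined, that PhiHat is bounded below by eps = exp(-(|uT| + |f| T) / sigma^2),
   PsiHat lies in [0, |m0|/eps] on such matrices, and
   that both maps are antitone.  Consequently the iterates psi^n increase, phi^{n+1/2}
   decrease, both are bounded, hence converge, and by continuity of f the limits solve
   the coupled system. *)

section \<open>The row operator and its discrete maximum principle\<close>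

definition row_op ::
  "real \<Rightarrow> real \<Rightarrow> nat \<Rightarrow> (nat \<Rightarrow> real \<Rightarrow> real) \<Rightarrow> (nat \<Rightarrow> real) \<Rightarrow> nat \<Rightarrow> real" where
  "row_op a k J g v j = (a + g j (v j)) * v j - k * (v (min (j+1) J) - 2 * v j + v (j - 1))"

text \<open>Row j \<le> J only reads entries 0..J, so solutions may be truncated to zero beyond J.\<close>
lemma row_op_truncate:
  "j \<le> J \<Longrightarrow> row_op a k J g (\<lambda>j. if j \<le> J then v j else 0) j = row_op a k J g v j"
  by (simp add: row_op_def)

lemma exists_max_index:
  fixes h :: "nat \<Rightarrow> real"
  shows "\<exists>j\<le>J. \<forall>j'\<le>J. h j' \<le> h j"
proof -
  have "Max (h ` {..J}) \<in> h ` {..J}" by (rule Max_in) auto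
  then obtain j where "j \<le> J" "h j = Max (h ` {..J})" by (metis imageE atMost_iff)
  moreover have "\<forall>j'\<le>J. h j' \<le> Max (h ` {..J})" by simp
  ultimately show ?thesis by metis
qed

lemma laplacian_at_max:
  fixes h :: "nat \<Rightarrow> real"
  assumes "j \<le> J" "\<forall>j'\<le>J. h j' \<le> h j"
  shows "h (min (j+1) J) - 2 * h j + h (j - 1) \<le> 0"
proof -
  have "h (min (j+1) J) \<le> h j" "h (j - 1) \<le> h j" using assms by auto
  then show ?thesis by linarith
qed

text \<open>At a maximiser of w - v the discrete Laplacian of w - v is
  nonpositive, which contradicts w > v there.\<close>
lemma row_comparison:
  assumes a: "a > 0" and k: "k \<ge> 0"
    and v: "\<forall>j\<le>J. row_op a k J g1 v j = b1 j" and w: "\<forall>j\<le>J. row_op a k J g2 w j = b2 j"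
    and b: "\<forall>j\<le>J. b2 j \<le> b1 j" and v_nonneg: "\<forall>j\<le>J. 0 \<le> v j"
    and g: "\<forall>j\<le>J. \<forall>x y. 0 \<le> x \<longrightarrow> x < y \<longrightarrow> g1 j x \<le> g2 j y"
    and g1: "\<forall>j\<le>J. \<forall>x. 0 \<le> x \<longrightarrow> 0 \<le> g1 j x"
  shows "\<forall>j\<le>J. w j \<le> v j"
proof (rule ccontr)
  assume "\<not> ?thesis"
  then obtain j1 where j1: "j1 \<le> J" "w j1 > v j1" by auto
  obtain j where j: "j \<le> J" "\<forall>j'\<le>J. w j' - v j' \<le> w j - v j"
    using exists_max_index[of J "\<lambda>j. w j - v j"] by auto
  have pos: "w j - v j > 0" using j j1 by force
  have v_j: "0 \<le> v j" using v_nonneg j by auto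
  have g_le: "g1 j (v j) \<le> g2 j (w j)" and g1_j: "0 \<le> g1 j (v j)"
    using g g1 j v_j pos by auto
  have "g1 j (v j) * w j \<le> g2 j (w j) * w j" using g_le pos v_j by (intro mult_right_mono) auto
  moreover have "g1 j (v j) * v j \<le> g1 j (v j) * w j" using g1_j pos by (intro mult_left_mono) auto
  moreover have "k * ((w (min (j+1) J) - v (min (j+1) J)) - 2 * (w j - v j) + (w (j-1) - v (j-1))) \<le> 0"
    using laplacian_at_max[of j J "\<lambda>j. w j - v j"] j k by (intro mult_nonneg_nonpos) auto
  moreover have "a * (w j - v j) > 0" using a pos by simp
  moreover have "row_op a k J g1 v j = b1 j" "row_op a k J g2 w j = b2 j" "b2 j \<le> b1 j"
    using v w b j by auto
  ultimately show False unfolding row_op_def by (simp add: algebra_simps)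
qed

text \<open>Lower bound: at a minimiser the Laplacian term is nonnegative, so the minimum is
  at least beta / (a + M) when b \<ge> beta \<ge> 0 and g \<le> M.\<close>
lemma row_lower_bound:
  assumes a: "a > 0" and k: "k \<ge> 0"
    and v: "\<forall>j\<le>J. row_op a k J g v j = b j"
    and g_nonneg: "\<forall>j\<le>J. \<forall>x. 0 \<le> g j x" and g_le: "\<forall>j\<le>J. \<forall>x. g j x \<le> M"
    and beta: "0 \<le> \<beta>" "\<forall>j\<le>J. \<beta> \<le> b j"
  shows "\<forall>j\<le>J. \<beta> / (a + M) \<le> v j"
proof -
  obtain j where j: "j \<le> J" "\<forall>j'\<le>J. - v j' \<le> - v j"
    using exists_max_index[of J "\<lambda>j. - v j"] by auto
  have "k * (v (min (j+1) J) - 2 * v j + v (j-1)) \<ge> 0"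
    using laplacian_at_max[of j J "\<lambda>j. - v j"] j k by (intro mult_nonneg_nonneg) auto
  moreover have "row_op a k J g v j = b j" "\<beta> \<le> b j" using v beta j by auto
  ultimately have key: "(a + g j (v j)) * v j \<ge> \<beta>" unfolding row_op_def by linarith
  have g_j: "0 \<le> g j (v j)" "g j (v j) \<le> M" using g_nonneg g_le j by auto
  have v_j: "v j \<ge> 0"
  proof (rule ccontr)
    assume "\<not> v j \<ge> 0"
    then have "(a + g j (v j)) * v j < 0" using a g_j by (intro mult_pos_neg) auto
    then show False using key beta by linarith
  qed
  have "(a + M) * v j \<ge> (a + g j (v j)) * v j" using v_j g_j by (intro mult_right_mono) auto
  then have "\<beta> / (a + M) \<le> v j" using key a g_j by (simp add: divide_le_eq mult.commute)
  then show ?thesis using j by force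
qed

text \<open>Upper bound: at a maximiser of a nonnegative solution, a v \<le> b.\<close>
lemma row_upper_bound:
  assumes a: "a > 0" and k: "k \<ge> 0"
    and v: "\<forall>j\<le>J. row_op a k J g v j = b j" and v_nonneg: "\<forall>j\<le>J. 0 \<le> v j"
    and g_nonneg: "\<forall>j\<le>J. \<forall>x. 0 \<le> x \<longrightarrow> 0 \<le> g j x" and b: "\<forall>j\<le>J. b j \<le> B"
  shows "\<forall>j\<le>J. v j \<le> B / a"
proof -
  obtain j where j: "j \<le> J" "\<forall>j'\<le>J. v j' \<le> v j"
    using exists_max_index[of J v] by auto
  have "k * (v (min (j+1) J) - 2 * v j + v (j-1)) \<le> 0"
    using laplacian_at_max[of j J v] j k by (intro mult_nonneg_nonpos) auto
  moreover have "row_op a k J g v j = b j" "b j \<le> B" using v b j by auto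
  ultimately have key: "(a + g j (v j)) * v j \<le> B" unfolding row_op_def by linarith
  have v_j: "0 \<le> v j" and g_j: "0 \<le> g j (v j)" using v_nonneg g_nonneg j by auto
  have "a * v j \<le> (a + g j (v j)) * v j" using v_j g_j by (intro mult_right_mono) auto
  then have "v j \<le> B / a" using key a by (simp add: le_divide_eq mult.commute)
  then show ?thesis using j by force
qed

section \<open>Existence of nonnegative row solutions\<close>

text \<open>The scalar equation (c + g x) x = r has a nonnegative solution (intermediate value
  theorem on [0, r/c]) ...\<close>
lemma scalar_equation_solvable:
  fixes g :: "real \<Rightarrow> real"
  assumes c: "c > 0" and g_cont: "\<forall>x. isCont g x" and g_nonneg: "\<forall>x\<ge>0. 0 \<le> g x" and r: "r \<ge> 0"
  shows "\<exists>x\<ge>0. (c + g x) * x = r"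
proof -
  have cont: "continuous_on {0..r/c} (\<lambda>x. (c + g x) * x)"
    using g_cont by (intro continuous_at_imp_continuous_on ballI continuous_intros) auto
  have "g (r/c) \<ge> 0" using g_nonneg r c by auto
  then have "(c + g (r/c)) * (r/c) \<ge> r" using c r by (simp add: algebra_simps)
  then obtain x where "0 \<le> x" "(c + g x) * x = r"
    using IVT'[of "\<lambda>x. (c + g x) * x" 0 r "r/c"] cont r c by auto
  then show ?thesis by auto
qed

lemma scalar_equation_mono:
  fixes g :: "real \<Rightarrow> real"
  assumes c: "c > 0" and g_mono: "\<forall>x y. 0 \<le> x \<longrightarrow> x \<le> y \<longrightarrow> g x \<le> g y"
    and g_nonneg: "\<forall>x\<ge>0. 0 \<le> g x"
    and xy: "0 \<le> x" "0 \<le> y" and le: "(c + g x) * x \<le> (c + g y) * y"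
  shows "x \<le> y"
proof (rule ccontr)
  assume "\<not> x \<le> y"
  then have yx: "y < x" by simp
  have "g y * y \<le> g x * x" using g_mono g_nonneg xy yx by (intro mult_mono) auto
  moreover have "c * y < c * x" using c yx by simp
  ultimately show False using le by (simp add: algebra_simps)
qed

text \<open>A Jacobi sweep solves each row equation for v_j with the neighbours frozen at w.
  Starting from 0, the sweeps increase and stay below (sum b) / a; their limit solves the
  row system.\<close>
context
  fixes a k :: real and J :: nat and g :: "nat \<Rightarrow> real \<Rightarrow> real" and b :: "nat \<Rightarrow> real"
  assumes a_pos: "a > 0" and k_nonneg: "k \<ge> 0" and b_nonneg: "\<forall>j\<le>J. 0 \<le> b j"
    and g_cont: "\<forall>j\<le>J. \<forall>x. isCont (g j) x" and g_nonneg: "\<forall>j\<le>J. \<forall>x\<ge>0. 0 \<le> g j x"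
    and g_mono: "\<forall>j\<le>J. \<forall>x y. 0 \<le> x \<longrightarrow> x \<le> y \<longrightarrow> g j x \<le> g j y"
begin

definition jacobi_rhs :: "(nat \<Rightarrow> real) \<Rightarrow> nat \<Rightarrow> real" where
  "jacobi_rhs w j = b j + k * (w (min (j+1) J) + w (j - 1))"

definition jacobi_step :: "(nat \<Rightarrow> real) \<Rightarrow> nat \<Rightarrow> real" where
  "jacobi_step w j = (SOME x. 0 \<le> x \<and> (a + 2 * k + g j x) * x = jacobi_rhs w j)"

definition jacobi_bound :: real where
  "jacobi_bound = (\<Sum>j\<le>J. b j) / a"

definition jacobi_iter :: "nat \<Rightarrow> nat \<Rightarrow> real" where
  "jacobi_iter n = (jacobi_step ^^ n) (\<lambda>_. 0)"

lemma jacobi_step_spec: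
  assumes w: "\<forall>j\<le>J. 0 \<le> w j" and j: "j \<le> J"
  shows "0 \<le> jacobi_step w j \<and> (a + 2 * k + g j (jacobi_step w j)) * jacobi_step w j = jacobi_rhs w j"
proof -
  have "jacobi_rhs w j \<ge> 0"
    unfolding jacobi_rhs_def using w j b_nonneg k_nonneg by (auto intro!: add_nonneg_nonneg mult_nonneg_nonneg)
  then have "\<exists>x\<ge>0. (a + 2 * k + g j x) * x = jacobi_rhs w j"
    using scalar_equation_solvable[of "a + 2 * k" "g j"] a_pos k_nonneg g_cont g_nonneg j by auto
  then show ?thesis unfolding jacobi_step_def by (rule someI_ex[where P="\<lambda>x. 0 \<le> x \<and> _ x"])
qed

lemma jacobi_step_bounded:
  assumes w: "\<forall>j\<le>J. 0 \<le> w j \<and> w j \<le> jacobi_bound" and j: "j \<le> J"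
  shows "jacobi_step w j \<le> jacobi_bound"
proof -
  define x where "x = jacobi_step w j"
  have x: "0 \<le> x" "(a + 2 * k + g j x) * x = jacobi_rhs w j"
    using jacobi_step_spec[of w j] w j by (auto simp: x_def)
  have "(a + 2 * k) * x \<le> (a + 2 * k + g j x) * x"
    using x g_nonneg j by (intro mult_right_mono) auto
  also have "\<dots> = jacobi_rhs w j" using x by simp
  also have "\<dots> \<le> (\<Sum>j\<le>J. b j) + k * (jacobi_bound + jacobi_bound)"
    unfolding jacobi_rhs_def using w j k_nonneg b_nonneg
    by (intro add_mono mult_left_mono member_le_sum) auto
  also have "\<dots> = (a + 2 * k) * jacobi_bound" using a_pos by (simp add: jacobi_bound_def algebra_simps)
  finally show ?thesis using a_pos k_nonneg by (simp add: x_def)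
qed

lemma jacobi_step_mono:
  assumes w: "\<forall>j\<le>J. 0 \<le> w1 j \<and> w1 j \<le> w2 j" and j: "j \<le> J"
  shows "jacobi_step w1 j \<le> jacobi_step w2 j"
proof (rule scalar_equation_mono[of "a + 2 * k" "g j"])
  have w1: "\<forall>j\<le>J. 0 \<le> w1 j" and w2: "\<forall>j\<le>J. 0 \<le> w2 j" using w by force+
  have "jacobi_rhs w1 j \<le> jacobi_rhs w2 j"
    unfolding jacobi_rhs_def using w j k_nonneg by (intro add_left_mono mult_left_mono add_mono) auto
  then show "(a + 2 * k + g j (jacobi_step w1 j)) * jacobi_step w1 j
      \<le> (a + 2 * k + g j (jacobi_step w2 j)) * jacobi_step w2 j"
    using jacobi_step_spec[OF w1 j] jacobi_step_spec[OF w2 j] by simp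
  show "0 \<le> jacobi_step w1 j" "0 \<le> jacobi_step w2 j"
    using jacobi_step_spec[OF w1 j] jacobi_step_spec[OF w2 j] by simp_all
  show "a + 2 * k > 0" using a_pos k_nonneg by simp
  show "\<forall>x y. 0 \<le> x \<longrightarrow> x \<le> y \<longrightarrow> g j x \<le> g j y" "\<forall>x\<ge>0. 0 \<le> g j x"
    using g_mono g_nonneg j by simp_all
qed

lemma jacobi_iter_bounded: "\<forall>j\<le>J. 0 \<le> jacobi_iter n j \<and> jacobi_iter n j \<le> jacobi_bound"
proof (induction n)
  case 0
  have "0 \<le> (\<Sum>j\<le>J. b j)" using b_nonneg by (intro sum_nonneg) auto
  then have "0 \<le> jacobi_bound" using a_pos by (simp add: jacobi_bound_def)
  then show ?case by (simp add: jacobi_iter_def)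
next
  case (Suc n)
  then show ?case using jacobi_step_spec[of "jacobi_iter n"] jacobi_step_bounded[of "jacobi_iter n"]
    by (simp add: jacobi_iter_def)
qed

lemma jacobi_iter_incr: "\<forall>j\<le>J. jacobi_iter n j \<le> jacobi_iter (Suc n) j"
proof (induction n)
  case 0
  then show ?case using jacobi_iter_bounded[of 1] by (simp add: jacobi_iter_def)
next
  case (Suc n)
  then show ?case using jacobi_step_mono[of "jacobi_iter n" "jacobi_iter (Suc n)"] jacobi_iter_bounded[of n]
    by (simp add: jacobi_iter_def)
qed

lemma row_exists: "\<exists>v. (\<forall>j\<le>J. 0 \<le> v j) \<and> (\<forall>j\<le>J. row_op a k J g v j = b j)"
proof -
  define v where "v j = Sup (range (\<lambda>n. jacobi_iter n j))" for j
  have lim: "(\<lambda>n. jacobi_iter n j) \<longlonglongrightarrow> v j" if j: "j \<le> J" for j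
    unfolding v_def
  proof (rule LIMSEQ_incseq_SUP)
    show "bdd_above (range (\<lambda>n. jacobi_iter n j))"
      using jacobi_iter_bounded j by (intro bdd_aboveI2[where M=jacobi_bound]) auto
    show "incseq (\<lambda>n. jacobi_iter n j)" using jacobi_iter_incr j by (intro incseq_SucI) auto
  qed
  have v_nonneg: "0 \<le> v j" if j: "j \<le> J" for j
    using lim[OF j] jacobi_iter_bounded j by (intro LIMSEQ_le_const) auto
  have "row_op a k J g v j = b j" if j: "j \<le> J" for j
  proof -
    have step: "(a + 2 * k + g j (jacobi_iter (Suc n) j)) * jacobi_iter (Suc n) j = jacobi_rhs (jacobi_iter n) j" for n
      using jacobi_step_spec[of "jacobi_iter n" j] jacobi_iter_bounded[of n] j by (simp add: jacobi_iter_def)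
    have lim_Suc: "(\<lambda>n. jacobi_iter (Suc n) j) \<longlonglongrightarrow> v j" using lim[OF j] by (rule LIMSEQ_Suc)
    have "(\<lambda>n. g j (jacobi_iter (Suc n) j)) \<longlonglongrightarrow> g j (v j)"
      using g_cont j by (intro isCont_tendsto_compose[OF _ lim_Suc]) auto
    then have lhs: "(\<lambda>n. (a + 2 * k + g j (jacobi_iter (Suc n) j)) * jacobi_iter (Suc n) j)
        \<longlonglongrightarrow> (a + 2 * k + g j (v j)) * v j"
      using lim_Suc by (intro tendsto_mult tendsto_add tendsto_const)
    have "min (j+1) J \<le> J" "j - 1 \<le> J" using j by auto
    then have "(\<lambda>n. jacobi_rhs (jacobi_iter n) j) \<longlonglongrightarrow> jacobi_rhs v j"
      unfolding jacobi_rhs_def by (intro tendsto_mult tendsto_add tendsto_const lim)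
    then have "(a + 2 * k + g j (v j)) * v j = jacobi_rhs v j"
      using LIMSEQ_unique[OF lhs] step by simp
    then show ?thesis unfolding row_op_def jacobi_rhs_def by (simp add: algebra_simps)
  qed
  then show ?thesis using v_nonneg by blast
qed

end

lemma build_rows_forward:
  fixes P :: "nat \<Rightarrow> (nat \<Rightarrow> real) \<Rightarrow> (nat \<Rightarrow> real) \<Rightarrow> bool"
  assumes r0: "\<forall>j\<le>J. 0 \<le> r0 j" "\<forall>j>J. r0 j = 0"
    and step: "\<And>i r. i < I \<Longrightarrow> \<forall>j\<le>J. 0 \<le> r j \<Longrightarrow> \<exists>v. (\<forall>j\<le>J. 0 \<le> v j) \<and> (\<forall>j>J. v j = 0) \<and> P i r v"
  shows "\<exists>M\<in>mats I J. (\<forall>j. M 0 j = r0 j) \<and> (\<forall>i<I. P i (M i) (M (Suc i)))"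
proof -
  define admissible where "admissible v \<longleftrightarrow> (\<forall>j\<le>J. 0 \<le> v j) \<and> (\<forall>j>J. v j = (0::real))"
    for v :: "nat \<Rightarrow> real"
  define R where "R = rec_nat r0 (\<lambda>i r. SOME v. admissible v \<and> P i r v)"
  have R_Suc: "R (Suc i) = (SOME v. admissible v \<and> P i (R i) v)" for i by (simp add: R_def)
  have next_row: "admissible (R (Suc i)) \<and> P i (R i) (R (Suc i))"
    if "i < I" "admissible (R i)" for i
  proof -
    have "\<exists>v. admissible v \<and> P i (R i) v" using step[of i "R i"] that unfolding admissible_def by blast
    then show ?thesis unfolding R_Suc by (rule someI_ex)
  qed
  have admissible_rows: "admissible (R i)" if "i \<le> I" for i
    using that
  proof (induction i)
    case 0
    then show ?case using r0 by (simp add: R_def admissible_def)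
  next
    case (Suc i)
    then show ?case using next_row by simp
  qed
  define M where "M i = (if i \<le> I then R i else (\<lambda>_. 0))" for i
  have "M \<in> mats I J" using admissible_rows by (auto simp: mats_def M_def admissible_def)
  moreover have "\<forall>j. M 0 j = r0 j" by (simp add: M_def R_def)
  moreover have "\<forall>i<I. P i (M i) (M (Suc i))" using next_row admissible_rows by (simp add: M_def)
  ultimately show ?thesis by blast
qed

lemma build_rows_backward:
  fixes P :: "nat \<Rightarrow> (nat \<Rightarrow> real) \<Rightarrow> (nat \<Rightarrow> real) \<Rightarrow> bool"
  assumes r0: "\<forall>j\<le>J. 0 \<le> r0 j" "\<forall>j>J. r0 j = 0"
    and step: "\<And>i r. i < I \<Longrightarrow> \<forall>j\<le>J. 0 \<le> r j \<Longrightarrow> \<exists>v. (\<forall>j\<le>J. 0 \<le> v j) \<and> (\<forall>j>J. v j = 0) \<and> P i r v"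
  shows "\<exists>M\<in>mats I J. (\<forall>j. M I j = r0 j) \<and> (\<forall>i<I. P i (M (Suc i)) (M i))"
proof -
  have "\<exists>N\<in>mats I J. (\<forall>j. N 0 j = r0 j) \<and> (\<forall>i<I. P (I - Suc i) (N i) (N (Suc i)))"
  proof (rule build_rows_forward[OF r0])
    fix i and r :: "nat \<Rightarrow> real" assume "i < I" "\<forall>j\<le>J. 0 \<le> r j"
    then show "\<exists>v. (\<forall>j\<le>J. 0 \<le> v j) \<and> (\<forall>j>J. v j = 0) \<and> P (I - Suc i) r v"
      by (intro step) auto
  qed
  then obtain N where N: "N \<in> mats I J" "\<forall>j. N 0 j = r0 j" "\<forall>i<I. P (I - Suc i) (N i) (N (Suc i))"
    by blast
  define M where "M i = (if i \<le> I then N (I - i) else (\<lambda>_. 0))" for i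
  have "M \<in> mats I J" using N(1) by (auto simp: mats_def M_def)
  moreover have "\<forall>j. M I j = r0 j" using N(2) by (simp add: M_def)
  moreover have "P i (M (Suc i)) (M i)" if i: "i < I" for i
  proof -
    have index: "I - Suc (I - Suc i) = i" "Suc (I - Suc i) = I - i" "I - (I - i) = i" using i by auto
    have "I - Suc i < I" using i by simp
    with N(3) have "P (I - Suc (I - Suc i)) (N (I - Suc i)) (N (Suc (I - Suc i)))" by blast
    moreover have "M (Suc i) = N (I - Suc i)" "M i = N (I - i)" using i by (auto simp: M_def)
    ultimately show ?thesis by (simp only: index)
  qed
  ultimately show ?thesis by blast
qed

definition reaction ::
  "real \<Rightarrow> nat \<Rightarrow> (real \<Rightarrow> real \<Rightarrow> real) \<Rightarrow> (nat \<Rightarrow> real) \<Rightarrow> nat \<Rightarrow> real \<Rightarrow> real" where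
  "reaction \<sigma> J f p j x = - (1 / \<sigma>\<^sup>2) * f (xg J j) (x * p j)"

text \<open>Multiplying by 1/dt turns one scheme equation into one row equation.\<close>
lemma backward_scheme_as_row:
  fixes dt a h s A B X G :: real
  assumes "dt \<noteq> 0" "a = 1 / dt"
  shows "((A - B) / dt + s * X / h = G * B) \<longleftrightarrow> ((a + G) * B - s / h * X = a * A)"
proof -
  have diff: "(a + G) * B - s / h * X - a * A = -((A - B) / dt + s * X / h - G * B)"
    unfolding assms(2) by (simp add: algebra_simps diff_divide_distrib)
  have "((A - B) / dt + s * X / h = G * B) \<longleftrightarrow> ((A - B) / dt + s * X / h - G * B = 0)"
    and "((a + G) * B - s / h * X = a * A) \<longleftrightarrow> ((a + G) * B - s / h * X - a * A = 0)" by simp_all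
  then show ?thesis unfolding diff neg_equal_0_iff_equal by simp
qed

lemma forward_scheme_as_row:
  fixes dt a h s A B X G :: real
  assumes "dt \<noteq> 0" "a = 1 / dt"
  shows "((A - B) / dt - s * X / h = G * A) \<longleftrightarrow> ((a + - G) * A - s / h * X = a * B)"
proof -
  have diff: "(a + - G) * A - s / h * X - a * B = (A - B) / dt - s * X / h - G * A"
    unfolding assms(2) by (simp add: algebra_simps diff_divide_distrib)
  have "((A - B) / dt - s * X / h = G * A) \<longleftrightarrow> ((A - B) / dt - s * X / h - G * A = 0)"
    and "((a + - G) * A - s / h * X = a * B) \<longleftrightarrow> ((a + - G) * A - s / h * X - a * B = 0)" by simp_all
  then show ?thesis unfolding diff by simp
qed

lemma phi_eqs_iff:
  assumes T: "T > 0" and I: "I > 0"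
  shows "phi_eqs T \<sigma> I J uT f psi phi \<longleftrightarrow>
    (\<forall>i<I. \<forall>j\<le>J. row_op (real I / T) (\<sigma>\<^sup>2 / 2 / (1 / real J)\<^sup>2) J (reaction \<sigma> J f (psi i)) (phi i) j
                  = real I / T * phi (i+1) j)
    \<and> (\<forall>j\<le>J. phi I j = exp (uT (xg J j) / \<sigma>\<^sup>2))"
proof -
  have dt: "T / real I \<noteq> 0" "real I / T = 1 / (T / real I)" using T I by auto
  show ?thesis unfolding phi_eqs_def row_op_def reaction_def lft_def rgt_def
    by (simp only: backward_scheme_as_row[OF dt])
qed

lemma psi_eqs_iff:
  assumes T: "T > 0" and I: "I > 0"
  shows "psi_eqs T \<sigma> I J m0 f phi psi \<longleftrightarrow>
    (\<forall>i<I. \<forall>j\<le>J. row_op (real I / T) (\<sigma>\<^sup>2 / 2 / (1 / real J)\<^sup>2) J (reaction \<sigma> J f (phi (i+1))) (psi (i+1)) j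
                  = real I / T * psi i j)
    \<and> (\<forall>j\<le>J. psi 0 j = m0 (xg J j) / phi 0 j)"
proof -
  have dt: "T / real I \<noteq> 0" "real I / T = 1 / (T / real I)" using T I by auto
  show ?thesis unfolding psi_eqs_def row_op_def reaction_def lft_def rgt_def
    by (simp only: forward_scheme_as_row[OF dt] mult.commute[of "psi _ _" "phi _ _"] minus_mult_left)
qed

lemma phi_eqs_limit:
  assumes T: "T > 0" and I: "I > 0" and J: "J > 0"
    and f_cont: "\<And>j y. j \<le> J \<Longrightarrow> isCont (f (xg J j)) y"
    and eqs: "\<And>n. phi_eqs T \<sigma> I J uT f (psiN n) (phiN n)"
    and lim_phi: "\<And>i j. i \<le> I \<Longrightarrow> j \<le> J \<Longrightarrow> (\<lambda>n. phiN n i j) \<longlonglongrightarrow> phi i j"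
    and lim_psi: "\<And>i j. i \<le> I \<Longrightarrow> j \<le> J \<Longrightarrow> (\<lambda>n. psiN n i j) \<longlonglongrightarrow> psi i j"
  shows "phi_eqs T \<sigma> I J uT f psi phi"
  unfolding phi_eqs_def
proof (intro conjI allI impI)
  fix i j assume i: "i < I" and j: "j \<le> J"
  have ij: "i \<le> I" "i + 1 \<le> I" "min (j + 1) J \<le> J" "j - 1 \<le> J" using i j by auto
  let ?lhs = "\<lambda>\<phi>. (\<phi> (i+1) j - \<phi> i j) / (T / real I)
      + \<sigma>\<^sup>2 / 2 * (rgt J \<phi> i j - 2 * \<phi> i j + lft \<phi> i j) / (1 / real J)\<^sup>2"
  let ?rhs = "\<lambda>\<phi> \<psi>. - (1 / \<sigma>\<^sup>2) * f (xg J j) (\<phi> i j * \<psi> i j) * \<phi> i j"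
  have lhs: "(\<lambda>n. ?lhs (phiN n)) \<longlonglongrightarrow> ?lhs phi"
    unfolding rgt_def lft_def using T I J
    by (intro tendsto_add tendsto_diff tendsto_divide tendsto_mult tendsto_const lim_phi ij j) auto
  have f_lim: "(\<lambda>n. f (xg J j) (phiN n i j * psiN n i j)) \<longlonglongrightarrow> f (xg J j) (phi i j * psi i j)"
    by (rule isCont_tendsto_compose[OF f_cont[OF j]]) (intro tendsto_mult lim_phi lim_psi ij j)
  have "?lhs (phiN n) = ?rhs (phiN n) (psiN n)" for n
    using eqs[of n] i j unfolding phi_eqs_def by blast
  moreover have "(\<lambda>n. ?rhs (phiN n) (psiN n)) \<longlonglongrightarrow> ?rhs phi psi"
    by (intro tendsto_mult tendsto_const f_lim lim_phi ij j)
  ultimately have "(\<lambda>n. ?lhs (phiN n)) \<longlonglongrightarrow> ?rhs phi psi" by simp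
  then show "?lhs phi = ?rhs phi psi" by (rule LIMSEQ_unique[OF lhs])
next
  fix j assume j: "j \<le> J"
  have "phiN n I j = exp (uT (xg J j) / \<sigma>\<^sup>2)" for n using eqs[of n] j unfolding phi_eqs_def by blast
  then show "phi I j = exp (uT (xg J j) / \<sigma>\<^sup>2)"
    using LIMSEQ_unique[OF lim_phi[OF order_refl j]] by simp
qed

lemma psi_eqs_limit:
  assumes T: "T > 0" and I: "I > 0" and J: "J > 0"
    and f_cont: "\<And>j y. j \<le> J \<Longrightarrow> isCont (f (xg J j)) y"
    and eqs: "\<And>n. psi_eqs T \<sigma> I J m0 f (phiN n) (psiN n)"
    and lim_phi: "\<And>i j. i \<le> I \<Longrightarrow> j \<le> J \<Longrightarrow> (\<lambda>n. phiN n i j) \<longlonglongrightarrow> phi i j"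
    and lim_psi: "\<And>i j. i \<le> I \<Longrightarrow> j \<le> J \<Longrightarrow> (\<lambda>n. psiN n i j) \<longlonglongrightarrow> psi i j"
    and phi_nonzero: "\<And>j. j \<le> J \<Longrightarrow> phi 0 j \<noteq> 0"
  shows "psi_eqs T \<sigma> I J m0 f phi psi"
  unfolding psi_eqs_def
proof (intro conjI allI impI)
  fix i j assume i: "i < I" and j: "j \<le> J"
  have ij: "i \<le> I" "i + 1 \<le> I" "min (j + 1) J \<le> J" "j - 1 \<le> J" using i j by auto
  let ?lhs = "\<lambda>\<psi>. (\<psi> (i+1) j - \<psi> i j) / (T / real I)
      - \<sigma>\<^sup>2 / 2 * (rgt J \<psi> (i+1) j - 2 * \<psi> (i+1) j + lft \<psi> (i+1) j) / (1 / real J)\<^sup>2"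
  let ?rhs = "\<lambda>\<phi> \<psi>. (1 / \<sigma>\<^sup>2) * f (xg J j) (\<phi> (i+1) j * \<psi> (i+1) j) * \<psi> (i+1) j"
  have lhs: "(\<lambda>n. ?lhs (psiN n)) \<longlonglongrightarrow> ?lhs psi"
    unfolding rgt_def lft_def using T I J
    by (intro tendsto_add tendsto_diff tendsto_divide tendsto_mult tendsto_const lim_psi ij j) auto
  have f_lim: "(\<lambda>n. f (xg J j) (phiN n (i+1) j * psiN n (i+1) j)) \<longlonglongrightarrow> f (xg J j) (phi (i+1) j * psi (i+1) j)"
    by (rule isCont_tendsto_compose[OF f_cont[OF j]]) (intro tendsto_mult lim_phi lim_psi ij j)
  have "?lhs (psiN n) = ?rhs (phiN n) (psiN n)" for n
    using eqs[of n] i j unfolding psi_eqs_def by blast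
  moreover have "(\<lambda>n. ?rhs (phiN n) (psiN n)) \<longlonglongrightarrow> ?rhs phi psi"
    by (intro tendsto_mult tendsto_const f_lim lim_psi ij j)
  ultimately have "(\<lambda>n. ?lhs (psiN n)) \<longlonglongrightarrow> ?rhs phi psi" by simp
  then show "?lhs psi = ?rhs phi psi" by (rule LIMSEQ_unique[OF lhs])
next
  fix j assume j: "j \<le> J"
  have "psiN n 0 j = m0 (xg J j) / phiN n 0 j" for n using eqs[of n] j unfolding psi_eqs_def by blast
  moreover have "(\<lambda>n. m0 (xg J j) / phiN n 0 j) \<longlonglongrightarrow> m0 (xg J j) / phi 0 j"
    using j by (intro tendsto_divide tendsto_const lim_phi phi_nonzero) auto
  ultimately show "psi 0 j = m0 (xg J j) / phi 0 j"
    using LIMSEQ_unique[OF lim_psi[OF _ j]] by simp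
qed

lemma abs_le_Sup_abs:
  fixes g :: "'a \<Rightarrow> real"
  assumes "bounded (g ` S)" "x \<in> S"
  shows "\<bar>g x\<bar> \<le> Sup ((\<lambda>x. \<bar>g x\<bar>) ` S)"
proof -
  obtain B where "\<forall>y\<in>g ` S. norm y \<le> B" using assms(1) bounded_iff by metis
  then have "bdd_above ((\<lambda>x. \<bar>g x\<bar>) ` S)" by (intro bdd_aboveI2[where M=B]) auto
  then show ?thesis using assms(2) by (rule cSUP_upper[rotated])
qed

lemma isCont_slice:
  fixes f :: "real \<Rightarrow> real \<Rightarrow> real"
  assumes "continuous_on (S \<times> UNIV) (\<lambda>(x, y). f x y)" "x \<in> S"
  shows "isCont (f x) y"
proof -
  have "continuous_on UNIV (\<lambda>y. (\<lambda>(x, y). f x y) (x, y))"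
    by (rule continuous_on_compose2[OF assms(1)]) (use assms(2) in \<open>auto intro!: continuous_intros\<close>)
  then show ?thesis by (simp add: continuous_on_eq_continuous_at)
qed

section \<open>The maps PhiHat and PsiHat\<close>

context
  fixes T \<sigma> :: real and I J :: nat and f :: "real \<Rightarrow> real \<Rightarrow> real" and F :: real
  assumes T: "T > 0" and \<sigma>: "\<sigma> > 0" and I: "I > 0" and J: "J > 0"
    and f_nonpos: "\<forall>x\<in>{0..1}. \<forall>y. f x y \<le> 0"
    and f_antimono: "\<forall>x\<in>{0..1}. \<forall>y1 y2. y1 \<le> y2 \<longrightarrow> f x y2 \<le> f x y1"
    and f_bound: "\<forall>x\<in>{0..1}. \<forall>y. \<bar>f x y\<bar> \<le> F"
    and f_cont: "\<forall>x\<in>{0..1}. \<forall>y. isCont (f x) y"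
begin

abbreviation inv_dt :: real where "inv_dt \<equiv> real I / T"
abbreviation diffusion :: real where "diffusion \<equiv> \<sigma>\<^sup>2 / 2 / (1 / real J)\<^sup>2"

lemma inv_dt_pos: "inv_dt > 0" using T I by simp
lemma diffusion_nonneg: "diffusion \<ge> 0" by simp

lemma grid_point: "j \<le> J \<Longrightarrow> xg J j \<in> {0..1}" using J by (auto simp: xg_def)

lemma reaction_nonneg: "j \<le> J \<Longrightarrow> 0 \<le> reaction \<sigma> J f p j x"
  unfolding reaction_def using f_nonpos grid_point[of j] \<sigma> by (intro mult_nonpos_nonpos) auto

lemma reaction_le: "j \<le> J \<Longrightarrow> reaction \<sigma> J f p j x \<le> F / \<sigma>\<^sup>2"
proof -
  assume j: "j \<le> J"
  have "- f (xg J j) (x * p j) \<le> F" using f_bound grid_point[OF j] abs_le_iff by blast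
  then have "(- f (xg J j) (x * p j)) / \<sigma>\<^sup>2 \<le> F / \<sigma>\<^sup>2" by (rule divide_right_mono) simp
  then show ?thesis unfolding reaction_def by simp
qed

lemma reaction_cont: "j \<le> J \<Longrightarrow> isCont (reaction \<sigma> J f p j) x"
proof -
  assume j: "j \<le> J"
  have "isCont (\<lambda>x. f (xg J j) (x * p j)) x"
  proof (rule isCont_o2[where g="f (xg J j)"])
    show "isCont (\<lambda>x. x * p j) x" by (intro continuous_intros)
    show "isCont (f (xg J j)) (x * p j)" using f_cont grid_point[OF j] by blast
  qed
  then show ?thesis unfolding reaction_def by (intro continuous_intros)
qed

text \<open>The coefficient increases with both its argument and the other unknown, since f is
  nonincreasing in its second variable.\<close>
lemma reaction_mono:
  assumes "j \<le> J" "0 \<le> p1 j" "p1 j \<le> p2 j" "0 \<le> x" "x \<le> y"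
  shows "reaction \<sigma> J f p1 j x \<le> reaction \<sigma> J f p2 j y"
proof -
  have "x * p1 j \<le> y * p2 j" using assms by (intro mult_mono) auto
  then have "f (xg J j) (y * p2 j) \<le> f (xg J j) (x * p1 j)" using f_antimono grid_point assms(1) by auto
  then show ?thesis unfolding reaction_def using \<sigma> by (intro mult_left_mono_neg) auto
qed

text \<open>Lower bound for phi: each backward step loses at most the factor
  q = a / (a + F/sigma^2), where a = 1/dt.\<close>
lemma phi_lower_geometric:
  assumes eqs: "phi_eqs T \<sigma> I J uT f psi phi" and uT: "\<forall>x\<in>{0..1}. \<bar>uT x\<bar> \<le> U"
    and i: "i \<le> I"
  shows "\<forall>j\<le>J. exp (- U / \<sigma>\<^sup>2) * (inv_dt / (inv_dt + F / \<sigma>\<^sup>2)) ^ (I - i) \<le> phi i j"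
proof -
  define M where "M = F / \<sigma>\<^sup>2"
  define q where "q = inv_dt / (inv_dt + M)"
  define c where "c = exp (- U / \<sigma>\<^sup>2)"
  have M: "M \<ge> 0" using f_bound[rule_format, of 0 0] by (simp add: M_def)
  have q: "0 \<le> q" unfolding q_def using inv_dt_pos M T by (intro divide_nonneg_nonneg) auto
  have c: "0 \<le> c" by (simp add: c_def)
  show ?thesis unfolding M_def[symmetric] q_def[symmetric] c_def[symmetric]
    using i
  proof (induction i rule: inc_induct)
    case base
    show ?case
    proof (intro allI impI)
      fix j assume j: "j \<le> J"
      have "- U \<le> uT (xg J j)" using uT grid_point[OF j] by fastforce
      then have "(- U) / \<sigma>\<^sup>2 \<le> uT (xg J j) / \<sigma>\<^sup>2" by (rule divide_right_mono) simp
      then show "c * q ^ (I - I) \<le> phi I j" using eqs j unfolding phi_eqs_def c_def by simp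
    qed
  next
    case (step n)
    define \<beta> where "\<beta> = inv_dt * (c * q ^ (I - Suc n))"
    have "\<forall>j\<le>J. \<beta> / (inv_dt + M) \<le> phi n j"
    proof (rule row_lower_bound[OF inv_dt_pos diffusion_nonneg])
      show "\<forall>j\<le>J. row_op inv_dt diffusion J (reaction \<sigma> J f (psi n)) (phi n) j = inv_dt * phi (Suc n) j"
        using eqs step.hyps unfolding phi_eqs_iff[OF T I] by simp
      show "0 \<le> \<beta>" unfolding \<beta>_def using inv_dt_pos q c by (intro mult_nonneg_nonneg zero_le_power) auto
      show "\<forall>j\<le>J. \<beta> \<le> inv_dt * phi (Suc n) j"
        using step.IH inv_dt_pos unfolding \<beta>_def by (intro allI impI mult_left_mono) auto
    qed (auto simp: reaction_nonneg reaction_le M_def)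
    moreover have "I - n = Suc (I - Suc n)" using step.hyps by auto
    then have "\<beta> / (inv_dt + M) = c * q ^ (I - n)"
      using inv_dt_pos M by (simp add: \<beta>_def q_def)
    ultimately show ?case by simp
  qed
qed

text \<open>Since q^I \<ge> exp(-F T / sigma^2) (because 1 + x \<le> exp x), phi \<ge> eps.\<close>
lemma phi_lower_eps:
  assumes eqs: "phi_eqs T \<sigma> I J uT f psi phi" and uT: "\<forall>x\<in>{0..1}. \<bar>uT x\<bar> \<le> U"
  shows "\<forall>i\<le>I. \<forall>j\<le>J. exp (- (1 / \<sigma>\<^sup>2) * (U + F * T)) \<le> phi i j"
proof (intro allI impI)
  fix i j assume i: "i \<le> I" and j: "j \<le> J"
  define M where "M = F / \<sigma>\<^sup>2"
  define q where "q = inv_dt / (inv_dt + M)"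
  have M: "M \<ge> 0" using f_bound[rule_format, of 0 0] by (simp add: M_def)
  have q: "0 \<le> q" "q \<le> 1"
    unfolding q_def using inv_dt_pos M by (auto intro: divide_nonneg_nonneg simp only: divide_le_eq_1_pos)
  have "exp (- (M * (T / real I))) \<le> q"
  proof -
    have "1 + M * (T / real I) \<le> exp (M * (T / real I))" by simp
    moreover have "0 < 1 + M * (T / real I)" using M T I by (simp add: add_pos_nonneg)
    ultimately have "1 / exp (M * (T / real I)) \<le> 1 / (1 + M * (T / real I))"
      by (intro divide_left_mono) auto
    moreover have "q = 1 / (1 + M * (T / real I))" using T I by (simp add: q_def field_simps)
    ultimately show ?thesis by (simp add: exp_minus field_simps)
  qed
  then have "exp (- (M * (T / real I))) ^ I \<le> q ^ I" by (intro power_mono) auto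
  also have "\<dots> \<le> q ^ (I - i)" using q by (intro power_decreasing) auto
  finally have "exp (- (M * T)) \<le> q ^ (I - i)" using I by (simp add: exp_of_nat_mult[symmetric])
  then have "exp (- U / \<sigma>\<^sup>2) * exp (- (M * T)) \<le> exp (- U / \<sigma>\<^sup>2) * q ^ (I - i)"
    by (intro mult_left_mono) auto
  also have "\<dots> \<le> phi i j" using phi_lower_geometric[OF eqs uT i] j by (simp add: q_def M_def)
  also have "exp (- U / \<sigma>\<^sup>2) * exp (- (M * T)) = exp (- (1 / \<sigma>\<^sup>2) * (U + F * T))"
    unfolding exp_add[symmetric] M_def by (simp add: add_divide_distrib)
  finally show "exp (- (1 / \<sigma>\<^sup>2) * (U + F * T)) \<le> phi i j" .
qed

lemma phi_nonneg:
  assumes "phi_eqs T \<sigma> I J uT f psi phi" "\<forall>x\<in>{0..1}. \<bar>uT x\<bar> \<le> U"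
  shows "\<forall>i\<le>I. \<forall>j\<le>J. 0 \<le> phi i j"
  using phi_lower_eps[OF assms] by (meson exp_ge_zero order_trans)

lemma phi_comparison:
  assumes eqsA: "phi_eqs T \<sigma> I J uT f psiA phiA" and eqsB: "phi_eqs T \<sigma> I J uT f psiB phiB"
    and uT: "\<forall>x\<in>{0..1}. \<bar>uT x\<bar> \<le> U"
    and psi: "\<forall>i\<le>I. \<forall>j\<le>J. 0 \<le> psiA i j \<and> psiA i j \<le> psiB i j"
    and i: "i \<le> I"
  shows "\<forall>j\<le>J. phiB i j \<le> phiA i j"
  using i
proof (induction i rule: inc_induct)
  case base
  then show ?case using eqsA eqsB unfolding phi_eqs_def by simp
next
  case (step n)
  show ?case
  proof (rule row_comparison[OF inv_dt_pos diffusion_nonneg])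
    show "\<forall>j\<le>J. row_op inv_dt diffusion J (reaction \<sigma> J f (psiA n)) (phiA n) j = inv_dt * phiA (Suc n) j"
      and "\<forall>j\<le>J. row_op inv_dt diffusion J (reaction \<sigma> J f (psiB n)) (phiB n) j = inv_dt * phiB (Suc n) j"
      using eqsA eqsB step.hyps unfolding phi_eqs_iff[OF T I] by simp_all
    show "\<forall>j\<le>J. inv_dt * phiB (Suc n) j \<le> inv_dt * phiA (Suc n) j"
      using step.IH inv_dt_pos by (intro allI impI mult_left_mono) auto
    show "\<forall>j\<le>J. 0 \<le> phiA n j" using phi_nonneg[OF eqsA uT] step.hyps by simp
    show "\<forall>j\<le>J. \<forall>x y. 0 \<le> x \<longrightarrow> x < y \<longrightarrow> reaction \<sigma> J f (psiA n) j x \<le> reaction \<sigma> J f (psiB n) j y"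
      using psi step.hyps by (auto intro!: reaction_mono)
    show "\<forall>j\<le>J. \<forall>x. 0 \<le> x \<longrightarrow> 0 \<le> reaction \<sigma> J f (psiA n) j x" by (simp add: reaction_nonneg)
  qed
qed

lemma phi_exists:
  assumes psi: "\<forall>i\<le>I. \<forall>j\<le>J. 0 \<le> psi i j"
  shows "\<exists>phi\<in>mats I J. phi_eqs T \<sigma> I J uT f psi phi"
proof -
  define P where "P i r v \<longleftrightarrow> (\<forall>j\<le>J. row_op inv_dt diffusion J (reaction \<sigma> J f (psi i)) v j = inv_dt * r j)"
    for i and r v :: "nat \<Rightarrow> real"
  define r0 where "r0 j = (if j \<le> J then exp (uT (xg J j) / \<sigma>\<^sup>2) else 0)" for j
  have "\<exists>M\<in>mats I J. (\<forall>j. M I j = r0 j) \<and> (\<forall>i<I. P i (M (Suc i)) (M i))"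
  proof (rule build_rows_backward)
    show "\<forall>j\<le>J. 0 \<le> r0 j" "\<forall>j>J. r0 j = 0" by (auto simp: r0_def)
  next
    fix i and r :: "nat \<Rightarrow> real" assume i: "i < I" and r: "\<forall>j\<le>J. 0 \<le> r j"
    have "\<exists>v. (\<forall>j\<le>J. 0 \<le> v j) \<and> (\<forall>j\<le>J. row_op inv_dt diffusion J (reaction \<sigma> J f (psi i)) v j = inv_dt * r j)"
    proof (rule row_exists[OF inv_dt_pos diffusion_nonneg])
      show "\<forall>j\<le>J. 0 \<le> inv_dt * r j" using inv_dt_pos r by (intro allI impI mult_nonneg_nonneg) auto
      show "\<forall>j\<le>J. \<forall>x y. 0 \<le> x \<longrightarrow> x \<le> y \<longrightarrow> reaction \<sigma> J f (psi i) j x \<le> reaction \<sigma> J f (psi i) j y"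
        using psi i by (auto intro!: reaction_mono)
    qed (simp_all add: reaction_cont reaction_nonneg)
    then obtain v where v: "\<forall>j\<le>J. 0 \<le> v j" "P i r v" unfolding P_def by blast
    have "P i r (\<lambda>j. if j \<le> J then v j else 0)" using v(2) unfolding P_def by (simp add: row_op_truncate)
    then show "\<exists>v. (\<forall>j\<le>J. 0 \<le> v j) \<and> (\<forall>j>J. v j = 0) \<and> P i r v"
      using v(1) by (intro exI[of _ "\<lambda>j. if j \<le> J then v j else 0"]) simp
  qed
  then obtain M where M: "M \<in> mats I J" "\<forall>j. M I j = r0 j" "\<forall>i<I. P i (M (Suc i)) (M i)" by blast
  have "phi_eqs T \<sigma> I J uT f psi M"
    unfolding phi_eqs_iff[OF T I]
  proof (intro conjI allI impI)
    fix i j assume "i < I" "j \<le> J"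
    then show "row_op inv_dt diffusion J (reaction \<sigma> J f (psi i)) (M i) j = inv_dt * M (i + 1) j"
      using M(3) unfolding P_def by simp
  next
    fix j assume "j \<le> J"
    then show "M I j = exp (uT (xg J j) / \<sigma>\<^sup>2)" using M(2) by (simp add: r0_def)
  qed
  then show ?thesis using M(1) by blast
qed

text \<open>PhiHat is well defined on nonnegative psi: existence from the row solver,
  uniqueness from the comparison principle.\<close>
lemma PhiHat_spec:
  assumes uT: "\<forall>x\<in>{0..1}. \<bar>uT x\<bar> \<le> U" and psi: "\<forall>i\<le>I. \<forall>j\<le>J. 0 \<le> psi i j"
  shows "phi_eqs T \<sigma> I J uT f psi (PhiHat T \<sigma> I J uT f psi)"
proof -
  have unique: "phi1 = phi2"
    if "phi1 \<in> mats I J" "phi_eqs T \<sigma> I J uT f psi phi1" "phi2 \<in> mats I J" "phi_eqs T \<sigma> I J uT f psi phi2"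
    for phi1 phi2
  proof (intro ext)
    fix i j
    have psi_le: "\<forall>i\<le>I. \<forall>j\<le>J. 0 \<le> psi i j \<and> psi i j \<le> psi i j" using psi by simp
    show "phi1 i j = phi2 i j"
    proof (cases "i \<le> I \<and> j \<le> J")
      case True
      then have "phi2 i j \<le> phi1 i j" "phi1 i j \<le> phi2 i j"
        using phi_comparison[OF that(2) that(4) uT psi_le] phi_comparison[OF that(4) that(2) uT psi_le]
        by simp_all
      then show ?thesis by simp
    next
      case False
      then show ?thesis using that(1,3) unfolding mats_def by auto
    qed
  qed
  obtain phi0 where phi0: "phi0 \<in> mats I J" "phi_eqs T \<sigma> I J uT f psi phi0"
    using phi_exists[OF psi] by blast
  have "\<exists>!phi. phi \<in> mats I J \<and> phi_eqs T \<sigma> I J uT f psi phi"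
  proof (rule ex1I[of _ phi0])
    fix phi assume "phi \<in> mats I J \<and> phi_eqs T \<sigma> I J uT f psi phi"
    then show "phi = phi0" using phi0 by (intro unique) auto
  qed (use phi0 in simp)
  then have "PhiHat T \<sigma> I J uT f psi \<in> mats I J \<and> phi_eqs T \<sigma> I J uT f psi (PhiHat T \<sigma> I J uT f psi)"
    unfolding PhiHat_def by (rule theI')
  then show ?thesis by simp
qed

text \<open>Nonnegativity of psi: the initial row m0/phi is nonnegative and the lower bound of
  the row operator propagates it forward.\<close>
lemma psi_nonneg:
  assumes eqs: "psi_eqs T \<sigma> I J m0 f phi psi" and e: "e > 0" and phi: "\<forall>i\<le>I. \<forall>j\<le>J. e \<le> phi i j"
    and m0: "\<forall>x\<in>{0..1}. 0 \<le> m0 x" and i: "i \<le> I"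
  shows "\<forall>j\<le>J. 0 \<le> psi i j"
  using i
proof (induction i)
  case 0
  show ?case
  proof (intro allI impI)
    fix j assume j: "j \<le> J"
    have "0 \<le> m0 (xg J j)" "0 < phi 0 j" using m0 grid_point[OF j] phi e j by force+
    then show "0 \<le> psi 0 j" using eqs j unfolding psi_eqs_def by simp
  qed
next
  case (Suc i)
  have "\<forall>j\<le>J. 0 / (inv_dt + F / \<sigma>\<^sup>2) \<le> psi (Suc i) j"
  proof (rule row_lower_bound[OF inv_dt_pos diffusion_nonneg])
    show "\<forall>j\<le>J. row_op inv_dt diffusion J (reaction \<sigma> J f (phi (Suc i))) (psi (Suc i)) j = inv_dt * psi i j"
      using eqs Suc.prems unfolding psi_eqs_iff[OF T I] by simp
    show "\<forall>j\<le>J. 0 \<le> inv_dt * psi i j"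
      using Suc inv_dt_pos by (intro allI impI mult_nonneg_nonneg) auto
  qed (simp_all add: reaction_nonneg reaction_le)
  then show ?case by simp
qed

text \<open>Upper bound for psi: the maximum of a row never exceeds the maximum of the previous
  row, and the initial row is at most max m0 / e.\<close>
lemma psi_upper:
  assumes eqs: "psi_eqs T \<sigma> I J m0 f phi psi" and e: "e > 0" and phi: "\<forall>i\<le>I. \<forall>j\<le>J. e \<le> phi i j"
    and m0: "\<forall>x\<in>{0..1}. 0 \<le> m0 x \<and> m0 x \<le> Mm" and i: "i \<le> I"
  shows "\<forall>j\<le>J. psi i j \<le> Mm / e"
  using i
proof (induction i)
  case 0
  show ?case
  proof (intro allI impI)
    fix j assume j: "j \<le> J"
    have "0 \<le> m0 (xg J j)" "m0 (xg J j) \<le> Mm" "e \<le> phi 0 j" using m0 grid_point[OF j] phi j by auto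
    then have "m0 (xg J j) / phi 0 j \<le> Mm / e" using e by (intro frac_le) auto
    then show "psi 0 j \<le> Mm / e" using eqs j unfolding psi_eqs_def by simp
  qed
next
  case (Suc i)
  have bound: "\<forall>j\<le>J. psi (Suc i) j \<le> inv_dt * (Mm / e) / inv_dt"
  proof (rule row_upper_bound[OF inv_dt_pos diffusion_nonneg])
    show "\<forall>j\<le>J. row_op inv_dt diffusion J (reaction \<sigma> J f (phi (Suc i))) (psi (Suc i)) j = inv_dt * psi i j"
      using eqs Suc.prems unfolding psi_eqs_iff[OF T I] by simp
    show "\<forall>j\<le>J. 0 \<le> psi (Suc i) j"
      using psi_nonneg[OF eqs e phi] m0 Suc.prems by simp
    show "\<forall>j\<le>J. inv_dt * psi i j \<le> inv_dt * (Mm / e)"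
      using Suc inv_dt_pos by (intro allI impI mult_left_mono) auto
  qed (simp add: reaction_nonneg)
  have cancel: "inv_dt * (Mm / e) / inv_dt = Mm / e"
    using inv_dt_pos by (intro nonzero_mult_div_cancel_left) linarith
  show ?case using bound unfolding cancel .
qed

lemma psi_comparison:
  assumes eqsA: "psi_eqs T \<sigma> I J m0 f phiA psiA" and eqsB: "psi_eqs T \<sigma> I J m0 f phiB psiB"
    and e: "e > 0" and phi: "\<forall>i\<le>I. \<forall>j\<le>J. e \<le> phiB i j \<and> phiB i j \<le> phiA i j"
    and m0: "\<forall>x\<in>{0..1}. 0 \<le> m0 x" and i: "i \<le> I"
  shows "\<forall>j\<le>J. psiA i j \<le> psiB i j"
  using i
proof (induction i)
  case 0
  show ?case
  proof (intro allI impI)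
    fix j assume j: "j \<le> J"
    have "0 \<le> m0 (xg J j)" "e \<le> phiB 0 j" "phiB 0 j \<le> phiA 0 j" using m0 grid_point[OF j] phi j by auto
    then have "m0 (xg J j) / phiA 0 j \<le> m0 (xg J j) / phiB 0 j" using e by (intro divide_left_mono) auto
    then show "psiA 0 j \<le> psiB 0 j" using eqsA eqsB j unfolding psi_eqs_def by simp
  qed
next
  case (Suc i)
  have phiB: "\<forall>i\<le>I. \<forall>j\<le>J. e \<le> phiB i j" using phi by simp
  show ?case
  proof (rule row_comparison[OF inv_dt_pos diffusion_nonneg])
    show "\<forall>j\<le>J. row_op inv_dt diffusion J (reaction \<sigma> J f (phiB (Suc i))) (psiB (Suc i)) j = inv_dt * psiB i j"
      and "\<forall>j\<le>J. row_op inv_dt diffusion J (reaction \<sigma> J f (phiA (Suc i))) (psiA (Suc i)) j = inv_dt * psiA i j"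
      using eqsA eqsB Suc.prems unfolding psi_eqs_iff[OF T I] by simp_all
    show "\<forall>j\<le>J. inv_dt * psiA i j \<le> inv_dt * psiB i j"
      using Suc inv_dt_pos by (intro allI impI mult_left_mono) auto
    show "\<forall>j\<le>J. 0 \<le> psiB (Suc i) j" using psi_nonneg[OF eqsB e phiB m0 Suc.prems] .
    show "\<forall>j\<le>J. \<forall>x y. 0 \<le> x \<longrightarrow> x < y \<longrightarrow> reaction \<sigma> J f (phiB (Suc i)) j x \<le> reaction \<sigma> J f (phiA (Suc i)) j y"
    proof (intro allI impI)
      fix j and x y :: real assume j: "j \<le> J" and xy: "0 \<le> x" "x < y"
      have "0 \<le> phiB (Suc i) j" "phiB (Suc i) j \<le> phiA (Suc i) j" using phi e Suc.prems j by force+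
      then show "reaction \<sigma> J f (phiB (Suc i)) j x \<le> reaction \<sigma> J f (phiA (Suc i)) j y"
        using reaction_mono[OF j] xy by simp
    qed
    show "\<forall>j\<le>J. \<forall>x. 0 \<le> x \<longrightarrow> 0 \<le> reaction \<sigma> J f (phiB (Suc i)) j x" by (simp add: reaction_nonneg)
  qed
qed

lemma psi_exists:
  assumes e: "e > 0" and phi: "\<forall>i\<le>I. \<forall>j\<le>J. e \<le> phi i j" and m0: "\<forall>x\<in>{0..1}. 0 \<le> m0 x"
  shows "\<exists>psi\<in>mats I J. psi_eqs T \<sigma> I J m0 f phi psi"
proof -
  define P where "P i r v \<longleftrightarrow> (\<forall>j\<le>J. row_op inv_dt diffusion J (reaction \<sigma> J f (phi (Suc i))) v j = inv_dt * r j)"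
    for i and r v :: "nat \<Rightarrow> real"
  define r0 where "r0 j = (if j \<le> J then m0 (xg J j) / phi 0 j else 0)" for j
  have "\<exists>M\<in>mats I J. (\<forall>j. M 0 j = r0 j) \<and> (\<forall>i<I. P i (M i) (M (Suc i)))"
  proof (rule build_rows_forward)
    show "\<forall>j\<le>J. 0 \<le> r0 j"
    proof (intro allI impI)
      fix j assume j: "j \<le> J"
      have "0 \<le> m0 (xg J j)" "0 \<le> phi 0 j" using m0 grid_point[OF j] phi e j by force+
      then show "0 \<le> r0 j" using j by (simp add: r0_def)
    qed
    show "\<forall>j>J. r0 j = 0" by (simp add: r0_def)
  next
    fix i and r :: "nat \<Rightarrow> real" assume i: "i < I" and r: "\<forall>j\<le>J. 0 \<le> r j"
    have "\<exists>v. (\<forall>j\<le>J. 0 \<le> v j) \<and> (\<forall>j\<le>J. row_op inv_dt diffusion J (reaction \<sigma> J f (phi (Suc i))) v j = inv_dt * r j)"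
    proof (rule row_exists[OF inv_dt_pos diffusion_nonneg])
      show "\<forall>j\<le>J. 0 \<le> inv_dt * r j" using inv_dt_pos r by (intro allI impI mult_nonneg_nonneg) auto
      show "\<forall>j\<le>J. \<forall>x y. 0 \<le> x \<longrightarrow> x \<le> y \<longrightarrow> reaction \<sigma> J f (phi (Suc i)) j x \<le> reaction \<sigma> J f (phi (Suc i)) j y"
      proof (intro allI impI)
        fix j and x y :: real assume j: "j \<le> J" and xy: "0 \<le> x" "x \<le> y"
        have "0 \<le> phi (Suc i) j" using phi[rule_format, of "Suc i" j] e i j by simp
        then show "reaction \<sigma> J f (phi (Suc i)) j x \<le> reaction \<sigma> J f (phi (Suc i)) j y"
          using reaction_mono[OF j] xy by simp
      qed
    qed (simp_all add: reaction_cont reaction_nonneg)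
    then obtain v where v: "\<forall>j\<le>J. 0 \<le> v j" "P i r v" unfolding P_def by blast
    have "P i r (\<lambda>j. if j \<le> J then v j else 0)" using v(2) unfolding P_def by (simp add: row_op_truncate)
    then show "\<exists>v. (\<forall>j\<le>J. 0 \<le> v j) \<and> (\<forall>j>J. v j = 0) \<and> P i r v"
      using v(1) by (intro exI[of _ "\<lambda>j. if j \<le> J then v j else 0"]) simp
  qed
  then obtain M where M: "M \<in> mats I J" "\<forall>j. M 0 j = r0 j" "\<forall>i<I. P i (M i) (M (Suc i))" by blast
  have "psi_eqs T \<sigma> I J m0 f phi M"
    unfolding psi_eqs_iff[OF T I]
  proof (intro conjI allI impI)
    fix i j assume "i < I" "j \<le> J"
    then show "row_op inv_dt diffusion J (reaction \<sigma> J f (phi (i + 1))) (M (i + 1)) j = inv_dt * M i j"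
      using M(3) unfolding P_def by simp
  next
    fix j assume "j \<le> J"
    then show "M 0 j = m0 (xg J j) / phi 0 j" using M(2) by (simp add: r0_def)
  qed
  then show ?thesis using M(1) by blast
qed

lemma PsiHat_spec:
  assumes e: "e > 0" and phi: "\<forall>i\<le>I. \<forall>j\<le>J. e \<le> phi i j" and m0: "\<forall>x\<in>{0..1}. 0 \<le> m0 x"
  shows "psi_eqs T \<sigma> I J m0 f phi (PsiHat T \<sigma> I J m0 f phi)"
proof -
  have unique: "psi1 = psi2"
    if "psi1 \<in> mats I J" "psi_eqs T \<sigma> I J m0 f phi psi1" "psi2 \<in> mats I J" "psi_eqs T \<sigma> I J m0 f phi psi2"
    for psi1 psi2
  proof (intro ext)
    fix i j
    have phi_le: "\<forall>i\<le>I. \<forall>j\<le>J. e \<le> phi i j \<and> phi i j \<le> phi i j" using phi by simp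
    show "psi1 i j = psi2 i j"
    proof (cases "i \<le> I \<and> j \<le> J")
      case True
      then have "psi2 i j \<le> psi1 i j" "psi1 i j \<le> psi2 i j"
        using psi_comparison[OF that(4) that(2) e phi_le m0] psi_comparison[OF that(2) that(4) e phi_le m0]
        by simp_all
      then show ?thesis by simp
    next
      case False
      then show ?thesis using that(1,3) unfolding mats_def by auto
    qed
  qed
  obtain psi0 where psi0: "psi0 \<in> mats I J" "psi_eqs T \<sigma> I J m0 f phi psi0"
    using psi_exists[OF e phi m0] by blast
  have "\<exists>!psi. psi \<in> mats I J \<and> psi_eqs T \<sigma> I J m0 f phi psi"
  proof (rule ex1I[of _ psi0])
    fix psi assume "psi \<in> mats I J \<and> psi_eqs T \<sigma> I J m0 f phi psi"
    then show "psi = psi0" using psi0 by (intro unique) auto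
  qed (use psi0 in simp)
  then have "PsiHat T \<sigma> I J m0 f phi \<in> mats I J \<and> psi_eqs T \<sigma> I J m0 f phi (PsiHat T \<sigma> I J m0 f phi)"
    unfolding PsiHat_def by (rule theI')
  then show ?thesis by simp
qed

section \<open>The monotone iteration\<close>

context
  fixes uT m0 :: "real \<Rightarrow> real" and U Mm :: real
  assumes uT_bound: "\<forall>x\<in>{0..1}. \<bar>uT x\<bar> \<le> U"
    and m0_bounds: "\<forall>x\<in>{0..1}. 0 \<le> m0 x \<and> m0 x \<le> Mm"
begin

abbreviation phi_min :: real where "phi_min \<equiv> exp (- (1 / \<sigma>\<^sup>2) * (U + F * T))"
abbreviation phi_it :: "nat \<Rightarrow> nat \<Rightarrow> nat \<Rightarrow> real" where "phi_it \<equiv> phi_seq T \<sigma> I J uT m0 f"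
abbreviation psi_it :: "nat \<Rightarrow> nat \<Rightarrow> nat \<Rightarrow> real" where "psi_it \<equiv> psi_seq T \<sigma> I J uT m0 f"

lemma phi_min_pos: "phi_min > 0" by simp

lemma m0_nonneg: "\<forall>x\<in>{0..1}. 0 \<le> m0 x" using m0_bounds by simp

lemma psi_it_Suc: "psi_it (Suc n) = PsiHat T \<sigma> I J m0 f (phi_it n)"
  by (simp add: phi_seq_def)

lemma PsiHat_bounds:
  assumes phi: "\<forall>i\<le>I. \<forall>j\<le>J. phi_min \<le> phi i j"
  shows "\<forall>i\<le>I. \<forall>j\<le>J. 0 \<le> PsiHat T \<sigma> I J m0 f phi i j \<and> PsiHat T \<sigma> I J m0 f phi i j \<le> Mm / phi_min"
proof -
  note eqs = PsiHat_spec[OF phi_min_pos phi m0_nonneg]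
  show ?thesis
    using psi_nonneg[OF eqs phi_min_pos phi m0_nonneg] psi_upper[OF eqs phi_min_pos phi m0_bounds] by simp
qed

text \<open>Invariant of the iteration: every psi^n lies in [0, Mm / phi_min], hence every
  phi^{n+1/2} solves its scheme and is bounded below by phi_min.\<close>
lemma psi_it_bounds: "\<forall>i\<le>I. \<forall>j\<le>J. 0 \<le> psi_it n i j \<and> psi_it n i j \<le> Mm / phi_min"
proof (induction n)
  case 0
  have "0 \<le> Mm" using m0_bounds by force
  then show ?case by simp
next
  case (Suc n)
  then have "\<forall>i\<le>I. \<forall>j\<le>J. phi_min \<le> phi_it n i j"
    unfolding phi_seq_def using phi_lower_eps[OF PhiHat_spec[OF uT_bound] uT_bound] by simp
  then show ?case unfolding psi_it_Suc by (rule PsiHat_bounds)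
qed

lemma phi_it_spec: "phi_eqs T \<sigma> I J uT f (psi_it n) (phi_it n) \<and> (\<forall>i\<le>I. \<forall>j\<le>J. phi_min \<le> phi_it n i j)"
proof
  show eqs: "phi_eqs T \<sigma> I J uT f (psi_it n) (phi_it n)"
    unfolding phi_seq_def using PhiHat_spec[OF uT_bound] psi_it_bounds[of n] by simp
  show "\<forall>i\<le>I. \<forall>j\<le>J. phi_min \<le> phi_it n i j" using phi_lower_eps[OF eqs uT_bound] .
qed

lemma psi_it_spec: "psi_eqs T \<sigma> I J m0 f (phi_it n) (psi_it (Suc n))"
  unfolding psi_it_Suc using PsiHat_spec[OF phi_min_pos conjunct2[OF phi_it_spec[of n]] m0_nonneg] .

lemma phi_it_antitone:
  assumes psi: "\<forall>i\<le>I. \<forall>j\<le>J. psi_it n i j \<le> psi_it m i j"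
  shows "\<forall>i\<le>I. \<forall>j\<le>J. phi_it m i j \<le> phi_it n i j"
proof (intro allI impI)
  fix i j assume i: "i \<le> I" and j: "j \<le> J"
  have "\<forall>i\<le>I. \<forall>j\<le>J. 0 \<le> psi_it n i j \<and> psi_it n i j \<le> psi_it m i j"
    using psi psi_it_bounds[of n] by simp
  then show "phi_it m i j \<le> phi_it n i j"
    using phi_comparison[OF conjunct1[OF phi_it_spec[of n]] conjunct1[OF phi_it_spec[of m]] uT_bound _ i] j
    by simp
qed

text \<open>Monotonicity of the iterates, by induction: psi^n \<le> psi^{n+1} gives
  phi^{n+3/2} \<le> phi^{n+1/2}, which gives psi^{n+1} \<le> psi^{n+2}.\<close>
lemma psi_it_mono: "\<forall>i\<le>I. \<forall>j\<le>J. psi_it n i j \<le> psi_it (Suc n) i j"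
proof (induction n)
  case 0
  then show ?case using psi_it_bounds[of 1] by simp
next
  case (Suc n)
  have "\<forall>i\<le>I. \<forall>j\<le>J. phi_min \<le> phi_it (Suc n) i j \<and> phi_it (Suc n) i j \<le> phi_it n i j"
    using phi_it_antitone[OF Suc.IH] phi_it_spec[of "Suc n"] by simp
  then show ?case
    using psi_comparison[OF psi_it_spec[of n] psi_it_spec[of "Suc n"] phi_min_pos _ m0_nonneg] by blast
qed

lemma phi_it_antimono: "\<forall>i\<le>I. \<forall>j\<le>J. phi_it (Suc n) i j \<le> phi_it n i j"
  using phi_it_antitone[OF psi_it_mono] .

text \<open>Bounded monotone sequences converge; by continuity of f the limits solve the
  coupled system, and they inherit the bounds phi_min \<le> phi and 0 \<le> psi.\<close>
lemma iterates_converge: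
  "\<exists>phiH psiH. phiH \<in> Meps I J phi_min \<and> psiH \<in> Meps I J 0
     \<and> (\<forall>i\<le>I. \<forall>j\<le>J. (\<lambda>n. phi_it n i j) \<longlonglongrightarrow> phiH i j)
     \<and> (\<forall>i\<le>I. \<forall>j\<le>J. (\<lambda>n. psi_it n i j) \<longlonglongrightarrow> psiH i j)
     \<and> phi_eqs T \<sigma> I J uT f psiH phiH
     \<and> psi_eqs T \<sigma> I J m0 f phiH psiH"
proof -
  define phiH where "phiH i j = Inf (range (\<lambda>n. phi_it n i j))" for i j
  define psiH where "psiH i j = Sup (range (\<lambda>n. psi_it n i j))" for i j
  have lim_phi: "(\<lambda>n. phi_it n i j) \<longlonglongrightarrow> phiH i j" if "i \<le> I" "j \<le> J" for i j
    unfolding phiH_def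
  proof (rule LIMSEQ_decseq_INF)
    show "bdd_below (range (\<lambda>n. phi_it n i j))"
      using phi_it_spec that by (intro bdd_belowI2[where m=phi_min]) blast
    show "decseq (\<lambda>n. phi_it n i j)" using phi_it_antimono that by (intro decseq_SucI) blast
  qed
  have lim_psi: "(\<lambda>n. psi_it n i j) \<longlonglongrightarrow> psiH i j" if "i \<le> I" "j \<le> J" for i j
    unfolding psiH_def
  proof (rule LIMSEQ_incseq_SUP)
    show "bdd_above (range (\<lambda>n. psi_it n i j))"
      using psi_it_bounds that by (intro bdd_aboveI2[where M="Mm / phi_min"]) blast
    show "incseq (\<lambda>n. psi_it n i j)" using psi_it_mono that by (intro incseq_SucI) blast
  qed
  have phiH_lower: "phi_min \<le> phiH i j" if "i \<le> I" "j \<le> J" for i j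
    using lim_phi[OF that] by (rule LIMSEQ_le_const) (use phi_it_spec that in blast)
  have psiH_nonneg: "0 \<le> psiH i j" if "i \<le> I" "j \<le> J" for i j
    using lim_psi[OF that] by (rule LIMSEQ_le_const) (use psi_it_bounds that in blast)
  have f_cont_grid: "isCont (f (xg J j)) y" if "j \<le> J" for j y
    using f_cont grid_point[OF that] by blast
  have "phi_eqs T \<sigma> I J uT f psiH phiH"
    using phi_eqs_limit[OF T I J f_cont_grid conjunct1[OF phi_it_spec] lim_phi lim_psi] .
  moreover have "psi_eqs T \<sigma> I J m0 f phiH psiH"
  proof (rule psi_eqs_limit[OF T I J f_cont_grid psi_it_spec lim_phi])
    show "(\<lambda>n. psi_it (Suc n) i j) \<longlonglongrightarrow> psiH i j" if "i \<le> I" "j \<le> J" for i j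
      using lim_psi[OF that] by (rule LIMSEQ_Suc)
    show "phiH 0 j \<noteq> 0" if "j \<le> J" for j
      using phiH_lower[OF _ that] phi_min_pos by force
  qed
  ultimately show ?thesis
    using phiH_lower psiH_nonneg lim_phi lim_psi unfolding Meps_def by blast
qed

theorem monotone_iteration:
  "((\<forall>n. phi_it n \<in> Meps I J phi_min) \<and> (\<forall>n. \<forall>i\<le>I. \<forall>j\<le>J. phi_it (Suc n) i j \<le> phi_it n i j))
   \<and> ((\<forall>n. psi_it n \<in> Meps I J 0) \<and> (\<forall>n. \<forall>i\<le>I. \<forall>j\<le>J. psi_it n i j \<le> psi_it (Suc n) i j)
      \<and> (\<forall>n. \<forall>i\<le>I. \<forall>j\<le>J. psi_it n i j \<le> Mm / phi_min))
   \<and> (\<exists>phiH psiH. phiH \<in> Meps I J phi_min \<and> psiH \<in> Meps I J 0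
       \<and> (\<forall>i\<le>I. \<forall>j\<le>J. (\<lambda>n. phi_it n i j) \<longlonglongrightarrow> phiH i j)
       \<and> (\<forall>i\<le>I. \<forall>j\<le>J. (\<lambda>n. psi_it n i j) \<longlonglongrightarrow> psiH i j)
       \<and> phi_eqs T \<sigma> I J uT f psiH phiH
       \<and> psi_eqs T \<sigma> I J m0 f phiH psiH)"
proof (intro conjI)
  show "\<forall>n. phi_it n \<in> Meps I J phi_min" using phi_it_spec unfolding Meps_def by blast
  show "\<forall>n. psi_it n \<in> Meps I J 0" using psi_it_bounds unfolding Meps_def by blast
  show "\<forall>n. \<forall>i\<le>I. \<forall>j\<le>J. psi_it n i j \<le> Mm / phi_min" using psi_it_bounds by blast
qed (use phi_it_antimono psi_it_mono iterates_converge in blast)+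

end

end

theorem proposition11:
  fixes T \<sigma> :: real and I J :: nat
    and uT m0 :: "real \<Rightarrow> real" and f :: "real \<Rightarrow> real \<Rightarrow> real"
  assumes "T > 0" "\<sigma> > 0" "I > 0" "J > 0"
    and "bounded (uT ` {0..1})"
    and "bounded (m0 ` {0..1})" "\<forall>x\<in>{0..1}. 0 \<le> m0 x"
    and "continuous_on ({0..1} \<times> UNIV) (\<lambda>(x, y). f x y)"
    and "\<forall>x\<in>{0..1}. \<forall>y1 y2. y1 \<le> y2 \<longrightarrow> f x y2 \<le> f x y1"
    and "bounded ((\<lambda>(x, y). f x y) ` ({0..1} \<times> UNIV))"
    and "\<forall>x\<in>{0..1}. \<forall>y. f x y \<le> 0"
  defines "normuT \<equiv> Sup ((\<lambda>x. \<bar>uT x\<bar>) ` {0..1})"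
    and "normf \<equiv> Sup ((\<lambda>(x, y). \<bar>f x y\<bar>) ` ({0..1} \<times> UNIV))"
    and "normm0 \<equiv> Sup ((\<lambda>x. \<bar>m0 x\<bar>) ` {0..1})"
  defines "eps \<equiv> exp (- (1 / \<sigma>\<^sup>2) * (normuT + normf * T))"
  defines "phi \<equiv> phi_seq T \<sigma> I J uT m0 f"
    and "psi \<equiv> psi_seq T \<sigma> I J uT m0 f"
  shows
    "((\<forall>n. phi n \<in> Meps I J eps)
     \<and> (\<forall>n. \<forall>i\<le>I. \<forall>j\<le>J. phi (Suc n) i j \<le> phi n i j))
    \<and> ((\<forall>n. psi n \<in> Meps I J 0)
     \<and> (\<forall>n. \<forall>i\<le>I. \<forall>j\<le>J. psi n i j \<le> psi (Suc n) i j)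
     \<and> (\<forall>n. \<forall>i\<le>I. \<forall>j\<le>J. psi n i j \<le> normm0 / eps))
    \<and> (\<exists>phiH psiH. phiH \<in> Meps I J eps \<and> psiH \<in> Meps I J 0
       \<and> (\<forall>i\<le>I. \<forall>j\<le>J. (\<lambda>n. phi n i j) \<longlonglongrightarrow> phiH i j)
       \<and> (\<forall>i\<le>I. \<forall>j\<le>J. (\<lambda>n. psi n i j) \<longlonglongrightarrow> psiH i j)
       \<and> phi_eqs T \<sigma> I J uT f psiH phiH
       \<and> psi_eqs T \<sigma> I J m0 f phiH psiH)"
proof -
  have uT_bound: "\<forall>x\<in>{0..1}. \<bar>uT x\<bar> \<le> normuT"
    unfolding normuT_def using abs_le_Sup_abs[OF assms(5)] by blast
  have m0_bounds: "\<forall>x\<in>{0..1}. 0 \<le> m0 x \<and> m0 x \<le> normm0"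
    unfolding normm0_def using abs_le_Sup_abs[OF assms(6)] assms(7) by fastforce
  have "(\<lambda>p. \<bar>(\<lambda>(x, y). f x y) p\<bar>) = (\<lambda>(x, y). \<bar>f x y\<bar>)" by auto
  then have f_bound: "\<forall>x\<in>{0..1}. \<forall>y. \<bar>f x y\<bar> \<le> normf"
    unfolding normf_def using abs_le_Sup_abs[OF assms(10)] by (metis SigmaI UNIV_I case_prod_conv)
  have f_cont: "\<forall>x\<in>{0..1}. \<forall>y. isCont (f x) y" using isCont_slice[OF assms(8)] by blast
  show ?thesis
    unfolding phi_def psi_def eps_def
    using monotone_iteration[OF assms(1-4,11,9) f_bound f_cont uT_bound m0_bounds] .
qed

end
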